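(* Let $2\le n\le\infty$. (1) If $a\in A\setminus C$ is $n$-RF rel a subgroup $C\le A$, then it is $m$-RF rel $C$ for every $2\le m\le n$. (2) For subgroups $C\le B\le A$, if $a\in A\setminus B$ is $n$-RF rel $B$, then it is $n$-RF rel $C$. (3) For subgroups $C\le B\le A$, if $(A,B)$ and $(B,C)$ are both $n$-RF, then $(A,C)$ is $n$-RF.
   Context: For a group $G$, subgroup $D$, and $2\le n\le\infty$: $a\in G\setminus D$ is $n$-RF rel $D$ if $a^{e_1}d_1\cdots a^{e_k}d_k\ne\mathrm{id}$ for all $k\ge1$, $e_i\in\{\pm1\}$, $d_i\in D$ such that $d_i\ne\mathrm{id}$ whenever $e_i=-e_{i+1}$ (indices mod $k$), and fewer than $n$ of the $e_i$ are $+1$ and fewer than $n$ are $-1$. The pair $(G,D)$ is $n$-RF if every element of $G\setminus D$ is $n$-RF rel $D$. *)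

theory Defs
  imports "HOL-Algebra.Group" "HOL-Library.Extended_Nat"
begin

text \<open>A word a^{e_1} d_1 ... a^{e_k} d_k is encoded as a list of pairs (e_i, d_i),
  where e_i = True means exponent +1 and e_i = False means exponent -1.\<close>

definition word_prod :: "('a, 'b) monoid_scheme \<Rightarrow> 'a \<Rightarrow> (bool \<times> 'a) list \<Rightarrow> 'a" where
  "word_prod G a ws =
     foldr (\<lambda>(e, d) acc. (if e then a else inv\<^bsub>G\<^esub> a) \<otimes>\<^bsub>G\<^esub> d \<otimes>\<^bsub>G\<^esub> acc) ws \<one>\<^bsub>G\<^esub>"

definition admissible_word :: "('a, 'b) monoid_scheme \<Rightarrow> 'a set \<Rightarrow> enat \<Rightarrow> (bool \<times> 'a) list \<Rightarrow> bool" where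
  "admissible_word G D n ws \<longleftrightarrow>
     length ws \<ge> 1 \<and>
     (\<forall>i < length ws. snd (ws ! i) \<in> D) \<and>
     (\<forall>i < length ws. fst (ws ! i) \<noteq> fst (ws ! ((i + 1) mod length ws)) \<longrightarrow> snd (ws ! i) \<noteq> \<one>\<^bsub>G\<^esub>) \<and>
     enat (length (filter fst ws)) < n \<and>
     enat (length (filter (\<lambda>x. \<not> fst x) ws)) < n"

definition RF_rel :: "('a, 'b) monoid_scheme \<Rightarrow> 'a set \<Rightarrow> enat \<Rightarrow> 'a \<Rightarrow> bool" where
  "RF_rel G D n a \<longleftrightarrow>
     a \<in> carrier G - D \<and>
     (\<forall>ws. admissible_word G D n ws \<longrightarrow> word_prod G a ws \<noteq> \<one>\<^bsub>G\<^esub>)"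

definition RF_pair :: "('a, 'b) monoid_scheme \<Rightarrow> 'a set \<Rightarrow> enat \<Rightarrow> bool" where
  "RF_pair G D n \<longleftrightarrow> (\<forall>a \<in> carrier G - D. RF_rel G D n a)"

end

theory Submission
  imports Defs
begin

text \<open>Being n-RF rel D only forbids admissible words from evaluating to the identity, and the
  set of admissible words grows with n and with D and does not depend on the ambient group.
  Moreover, if a and D lie in a subgroup B, a word has the same value in B as in the whole group.
  For transitivity, split on whether a lies in B.\<close>

lemma admissible_word_mono:
  assumes "admissible_word G D m ws" "m \<le> n" "D \<subseteq> E"
  shows "admissible_word G E n ws"
  using assms unfolding admissible_word_def by (meson order_less_le_trans subsetD)

lemma admissible_word_carrier_update [simp]:
  "admissible_word (G\<lparr>carrier := B\<rparr>) D n ws = admissible_word G D n ws"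
  unfolding admissible_word_def by simp

lemma word_prod_subgroup:
  assumes "group G" "subgroup B G" "a \<in> B"
  shows "word_prod (G\<lparr>carrier := B\<rparr>) a ws = word_prod G a ws"
  unfolding word_prod_def group.m_inv_consistent[OF assms] by simp

lemma RF_rel_mono:
  assumes "RF_rel G E n a" "m \<le> n" "D \<subseteq> E" "a \<notin> D"
  shows "RF_rel G D m a"
  using assms admissible_word_mono[OF _ \<open>m \<le> n\<close> \<open>D \<subseteq> E\<close>] unfolding RF_rel_def by auto

lemma RF_rel_subgroup:
  assumes "group G" "subgroup B G" "a \<in> B" "RF_rel (G\<lparr>carrier := B\<rparr>) D n a"
  shows "RF_rel G D n a"
  using assms subgroup.subset[OF \<open>subgroup B G\<close>] word_prod_subgroup[OF assms(1-3)]
  unfolding RF_rel_def by auto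

lemma RF_pair_trans:
  assumes "group G" "subgroup B G" "C \<subseteq> B"
    and "RF_pair G B n" and "RF_pair (G\<lparr>carrier := B\<rparr>) C n"
  shows "RF_pair G C n"
  unfolding RF_pair_def
proof
  fix a assume a: "a \<in> carrier G - C"
  show "RF_rel G C n a"
  proof (cases "a \<in> B")
    case True
    with a \<open>RF_pair (G\<lparr>carrier := B\<rparr>) C n\<close> have "RF_rel (G\<lparr>carrier := B\<rparr>) C n a"
      unfolding RF_pair_def by simp
    with assms(1,2) True show ?thesis by (rule RF_rel_subgroup)
  next
    case False
    with a \<open>RF_pair G B n\<close> have "RF_rel G B n a" unfolding RF_pair_def by simp
    with \<open>C \<subseteq> B\<close> a show ?thesis using RF_rel_mono[of G B n a n C] by simp
  qed
qed

theorem lemma5p21: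
  fixes A :: "('a, 'b) monoid_scheme" and n :: enat
  assumes "group A" and "2 \<le> n"
  shows "(\<forall>C a m. subgroup C A \<and> RF_rel A C n a \<and> 2 \<le> m \<and> m \<le> n \<longrightarrow> RF_rel A C m a)
       \<and> (\<forall>B C a. subgroup B A \<and> subgroup C A \<and> C \<subseteq> B \<and> a \<in> carrier A - B \<and> RF_rel A B n a
                  \<longrightarrow> RF_rel A C n a)
       \<and> (\<forall>B C. subgroup B A \<and> subgroup C A \<and> C \<subseteq> B \<and> RF_pair A B n
                  \<and> RF_pair (A\<lparr>carrier := B\<rparr>) C n \<longrightarrow> RF_pair A C n)"
proof (intro conjI allI impI)
  fix C a m assume "subgroup C A \<and> RF_rel A C n a \<and> 2 \<le> m \<and> m \<le> n"
  then have "RF_rel A C n a" "m \<le> n" by simp_all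
  moreover from \<open>RF_rel A C n a\<close> have "a \<notin> C" unfolding RF_rel_def by simp
  ultimately show "RF_rel A C m a" using RF_rel_mono[of A C n a m C] by simp
next
  fix B C a
  assume "subgroup B A \<and> subgroup C A \<and> C \<subseteq> B \<and> a \<in> carrier A - B \<and> RF_rel A B n a"
  then show "RF_rel A C n a" using RF_rel_mono[of A B n a n C] by auto
next
  fix B C assume "subgroup B A \<and> subgroup C A \<and> C \<subseteq> B \<and> RF_pair A B n
                  \<and> RF_pair (A\<lparr>carrier := B\<rparr>) C n"
  then show "RF_pair A C n" using RF_pair_trans[OF \<open>group A\<close>, of B C n] by simp
qed

end
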